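(* Let \(n\ge1\), \(\sigma\) a norm on \(\mathbb{R}^n\), \(V=(\mathbb{R}^n,\|\cdot\|)\) a normed space and \(I\colon\mathbb{R}^n\to V\) the identity map. Then for every Lipschitz \(\pi\colon V\to\mathbb{R}^n\) with \(\mathbf{L}^\sigma(\pi)\le1\), \[|\det D_p(\pi\circ I)|\le J^\sigma(\|\cdot\|)\] for \(\mathcal{H}^n\)-almost every \(p\in\mathbb{R}^n\). Moreover, there exists such a \(\pi^\ast\) (Lipschitz with \(\mathbf{L}^\sigma(\pi^\ast)\le1\)) for which equality holds almost everywhere.
   Context: \(\mathbf{L}^\sigma(\pi)\) is the Lipschitz constant of \(\pi\) as a map from \(V\) to \((\mathbb{R}^n,\sigma)\). \(J^\sigma(s)=\sup_F\mathscr{L}^n(B_\sigma)/\mathscr{L}^n(F^{-1}(B_\sigma))\), sup over linear \(F\colon\mathbb{R}^n\to\mathbb{R}^n\) with \(F^{-1}(B_\sigma)\) containing the unit ball of the norm \(s\); here \(s=\|\cdot\|\) is the metric differential of \(I\). The paper writes the left side as \(\mathrm{Jac}(D_x\pi)\cdot\mathrm{Jac}(D_pI)\) (with \(x=I(p)\) and \(\mathrm{Jac}\) of a linear map defined as the ratio \(\mathcal{H}^n(F(A))/\mathcal{H}^n(A)\)), which equals \(|\det D_p(\pi\circ I)|\). *)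

theory Defs
  imports "HOL-Analysis.Analysis"
begin

definition is_norm :: "(real^'n \<Rightarrow> real) \<Rightarrow> bool" where
  "is_norm N \<longleftrightarrow>
     (\<forall>x. 0 \<le> N x) \<and> (\<forall>x. N x = 0 \<longleftrightarrow> x = 0) \<and>
     (\<forall>c x. N (c *\<^sub>R x) = \<bar>c\<bar> * N x) \<and>
     (\<forall>x y. N (x + y) \<le> N x + N y)"

definition unit_ball :: "(real^'n \<Rightarrow> real) \<Rightarrow> (real^'n) set" where
  "unit_ball N = {x. N x \<le> 1}"

definition lip_le_1 :: "(real^'n \<Rightarrow> real) \<Rightarrow> (real^'n \<Rightarrow> real) \<Rightarrow> (real^'n \<Rightarrow> real^'n) \<Rightarrow> bool" where
  "lip_le_1 s \<sigma> \<pi> \<longleftrightarrow> (\<forall>x y. \<sigma> (\<pi> x - \<pi> y) \<le> s (x - y))"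

text \<open>J^sigma(s) = sup over linear F with F^{-1}(B_sigma) containing B_s of
  L^n(B_sigma) / L^n(F^{-1}(B_sigma)).  (If the preimage has infinite measure,
  'measure' gives 0 and the ratio is 0, the natural value.)\<close>
definition Jsigma :: "(real^'n \<Rightarrow> real) \<Rightarrow> (real^'n \<Rightarrow> real) \<Rightarrow> real" where
  "Jsigma \<sigma> s = Sup {measure lebesgue (unit_ball \<sigma>) / measure lebesgue (F -` unit_ball \<sigma>) | F.
       linear F \<and> unit_ball s \<subseteq> F -` unit_ball \<sigma>}"

end

theory Submission
  imports Defs
begin

(* A linear map F satisfies B_s \<subseteq> F^-1(B_\<sigma>) exactly when its Lipschitz constant from s to \<sigma>
   is at most 1, and then L(B_\<sigma>) / L(F^-1(B_\<sigma>)) = |det F|: for invertible F by the change of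
   volume under linear maps, for singular F because the preimage then contains a whole cylinder
   around the kernel and has infinite measure.  Hence J^\<sigma>(s) is the maximum of |det| over the
   compact set of such linear maps.  Every derivative of a map with L^\<sigma> \<le> 1 is such a linear
   map, which gives the inequality at every point of differentiability; a maximising linear map is
   its own derivative everywhere, which gives equality. *)

section \<open>Norms on R^n given as functions\<close>

lemma
  assumes "is_norm N"
  shows is_norm_nonneg: "0 \<le> N x"
    and is_norm_eq_0_iff: "N x = 0 \<longleftrightarrow> x = 0"
    and is_norm_scaleR: "N (c *\<^sub>R x) = \<bar>c\<bar> * N x"
    and is_norm_triangle: "N (x + y) \<le> N x + N y"
  using assms unfolding is_norm_def by blast+

lemma is_norm_0 [simp]: "is_norm N \<Longrightarrow> N 0 = 0"
  by (simp add: is_norm_eq_0_iff)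

lemma is_norm_pos: "is_norm N \<Longrightarrow> x \<noteq> 0 \<Longrightarrow> 0 < N x"
  by (simp add: is_norm_eq_0_iff is_norm_nonneg order_less_le)

lemma is_norm_minus: "is_norm N \<Longrightarrow> N (- x) = N x"
  using is_norm_scaleR[of N "-1" x] by simp

lemma is_norm_sum_le:
  assumes "is_norm N"
  shows "N (sum f A) \<le> (\<Sum>i\<in>A. N (f i))"
proof (induction A rule: infinite_finite_induct)
  case (insert a A)
  then show ?case
    using is_norm_triangle[OF assms, of "f a" "sum f A"] by simp
qed (use assms in auto)

lemma is_norm_le_norm:
  fixes N :: "real^'n \<Rightarrow> real"
  assumes "is_norm N"
  obtains C where "C > 0" "\<And>x. N x \<le> C * norm x"
proof
  define C where "C = 1 + (\<Sum>i\<in>UNIV. N (axis i 1))"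
  show "C > 0"
    unfolding C_def by (smt (verit) assms is_norm_nonneg sum_nonneg)
  fix x :: "real^'n"
  have "N x = N (\<Sum>i\<in>UNIV. x $ i *\<^sub>R axis i 1)"
    by (simp add: basis_expansion flip: scalar_mult_eq_scaleR)
  also have "\<dots> \<le> (\<Sum>i\<in>UNIV. \<bar>x $ i\<bar> * N (axis i 1))"
    using is_norm_sum_le[OF assms, of "\<lambda>i. x $ i *\<^sub>R axis i 1" UNIV]
    by (simp add: is_norm_scaleR[OF assms])
  also have "\<dots> \<le> (\<Sum>i\<in>UNIV. norm x * N (axis i 1))"
    by (intro sum_mono mult_right_mono component_le_norm_cart is_norm_nonneg[OF assms])
  also have "\<dots> \<le> C * norm x"
    by (simp add: C_def sum_distrib_left algebra_simps)
  finally show "N x \<le> C * norm x" .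
qed

lemma is_norm_lipschitz:
  fixes N :: "real^'n \<Rightarrow> real"
  assumes "is_norm N"
  obtains C where "C-lipschitz_on UNIV N"
proof -
  obtain C where "C > 0" and C: "\<And>x. N x \<le> C * norm x"
    using is_norm_le_norm[OF assms] by blast
  have "dist (N x) (N y) \<le> C * dist x y" for x y
    using is_norm_triangle[OF assms, of "x - y" y] is_norm_triangle[OF assms, of "y - x" x]
      is_norm_minus[OF assms, of "x - y"] C[of "x - y"]
    by (simp add: dist_real_def dist_norm abs_le_iff)
  then show thesis
    using \<open>C > 0\<close> by (intro that lipschitz_onI) auto
qed

lemma is_norm_continuous_on:
  fixes N :: "real^'n \<Rightarrow> real"
  shows "is_norm N \<Longrightarrow> continuous_on S N"
  by (metis continuous_on_subset is_norm_lipschitz lipschitz_on_continuous_on subset_UNIV)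

lemma is_norm_ge_norm:
  fixes N :: "real^'n \<Rightarrow> real"
  assumes "is_norm N"
  obtains c where "c > 0" "\<And>x. c * norm x \<le> N x"
proof -
  obtain y :: "real^'n" where y: "norm y = 1" and min: "\<And>z. norm z = 1 \<Longrightarrow> N y \<le> N z"
    using continuous_attains_inf[OF compact_sphere _ is_norm_continuous_on[OF assms], of 0 1]
    by (auto simp: sphere_eq_empty)
  have "N y * norm x \<le> N x" for x
  proof (cases "x = 0")
    case False
    then have "N y \<le> N (x /\<^sub>R norm x)"
      by (intro min) simp
    with False show ?thesis
      by (simp add: is_norm_scaleR[OF assms] field_simps)
  qed (use assms in simp)
  moreover have "N y > 0"
    using y is_norm_pos[OF assms, of y] by (metis norm_zero zero_neq_one)
  ultimately show thesis
    using that by blast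
qed

lemma closed_unit_ball: "is_norm N \<Longrightarrow> closed (unit_ball (N :: real^'n \<Rightarrow> real))"
  unfolding unit_ball_def
  by (intro closed_Collect_le is_norm_continuous_on continuous_on_const)

lemma compact_unit_ball:
  fixes N :: "real^'n \<Rightarrow> real"
  assumes "is_norm N"
  shows "compact (unit_ball N)"
proof -
  obtain c where "c > 0" and c: "\<And>x. c * norm x \<le> N x"
    using is_norm_ge_norm[OF assms] by blast
  have "c * norm x \<le> 1" if "N x \<le> 1" for x
    using that c[of x] by linarith
  with \<open>c > 0\<close> have "unit_ball N \<subseteq> cball 0 (1 / c)"
    by (auto simp: unit_ball_def field_simps)
  then show ?thesis
    using closed_unit_ball[OF assms] bounded_subset[OF bounded_cball]
    by (auto simp: compact_eq_bounded_closed)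
qed

lemma ball_subset_unit_ball:
  fixes N :: "real^'n \<Rightarrow> real"
  assumes "is_norm N"
  obtains r where "r > 0" "ball 0 r \<subseteq> unit_ball N"
proof -
  obtain C where "C > 0" "\<And>x. N x \<le> C * norm x"
    using is_norm_le_norm[OF assms] by blast
  then have "ball 0 (1 / C) \<subseteq> unit_ball N"
    by (force simp: unit_ball_def field_simps intro: order_trans)
  with \<open>C > 0\<close> show thesis
    by (intro that[of "1 / C"]) auto
qed

lemma measure_unit_ball_pos:
  fixes N :: "real^'n \<Rightarrow> real"
  assumes "is_norm N"
  shows "measure lebesgue (unit_ball N) > 0"
proof -
  obtain r where "r > 0" "ball 0 r \<subseteq> unit_ball N"
    using ball_subset_unit_ball[OF assms] by blast
  have "0 < measure lebesgue (ball (0::real^'n) r)"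
    using content_ball_pos[OF \<open>r > 0\<close>] by simp
  also have "\<dots> \<le> measure lebesgue (unit_ball N)"
    using \<open>ball 0 r \<subseteq> unit_ball N\<close>
    by (intro measure_mono_fmeasurable lmeasurable_compact compact_unit_ball assms) auto
  finally show ?thesis .
qed


section \<open>Lebesgue measure of linear images\<close>

(* The library's measure_linear_image requires a well-ordered index type, which is only used to
   compute the determinant of a shear; det_row_operation does that for any finite index type. *)
definition det_scales_measure :: "(real^'n \<Rightarrow> real^'n) \<Rightarrow> bool" where
  "det_scales_measure f \<longleftrightarrow>
     (\<forall>S \<in> lmeasurable. f ` S \<in> lmeasurable \<and>
        measure lebesgue (f ` S) = \<bar>det (matrix f)\<bar> * measure lebesgue S)"

lemma det_scales_measure_comp:
  assumes "linear f" "linear g" "det_scales_measure f" "det_scales_measure g"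
  shows "det_scales_measure (f \<circ> g)"
  using assms(3,4)
  unfolding det_scales_measure_def matrix_compose[OF \<open>linear g\<close> \<open>linear f\<close>]
    image_comp [symmetric] det_mul abs_mult
  by simp

lemma det_scales_measure_singular:
  assumes "linear f" "\<not> inj f"
  shows "det_scales_measure f"
proof -
  have "negligible (f ` S)" for S
    using negligible_linear_singular_image[OF assms] negligible_subset by blast
  moreover have "det (matrix f) = 0"
    using assms det_nz_iff_inj by blast
  ultimately show ?thesis
    by (simp add: det_scales_measure_def negligible_imp_measurable negligible_imp_measure0)
qed

lemma det_scales_measure_stretch:
  fixes c :: "'n::finite \<Rightarrow> real"
  shows "det_scales_measure (\<lambda>x::real^'n. \<chi> i. c i * x $ i)"
proof -
  have "det (matrix (\<lambda>x::real^'n. \<chi> i. c i * x $ i)) = prod c UNIV"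
    by (simp add: matrix_def axis_def det_diagonal)
  then show ?thesis
    by (simp add: det_scales_measure_def measurable_stretch measure_stretch)
qed

lemma det_scales_measure_unimodular:
  fixes f :: "real^'n \<Rightarrow> real^'n"
  assumes "linear f" "\<bar>det (matrix f)\<bar> = 1"
    and "\<And>a b. measure lebesgue (f ` cbox a b) = measure lebesgue (cbox a b)"
  shows "det_scales_measure f"
  unfolding det_scales_measure_def
proof
  fix S :: "(real^'n) set"
  assume "S \<in> lmeasurable"
  have "f ` S \<in> lmeasurable \<and> 1 * measure lebesgue S = measure lebesgue (f ` S)"
    by (rule measure_linear_sufficient[OF \<open>linear f\<close> \<open>S \<in> lmeasurable\<close>])
      (metis assms(3) mult_1)
  with assms(2) show "f ` S \<in> lmeasurable \<and>
      measure lebesgue (f ` S) = \<bar>det (matrix f)\<bar> * measure lebesgue S"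
    by simp
qed

lemma abs_det_involution:
  fixes f :: "real^'n \<Rightarrow> real^'n"
  assumes "linear f" "f \<circ> f = id"
  shows "\<bar>det (matrix f)\<bar> = 1"
proof -
  have "matrix f ** matrix f = mat 1"
    using matrix_compose[OF assms(1) assms(1)] assms(2) by (simp add: matrix_id_mat_1)
  then have "det (matrix f) ^ 2 = 1"
    by (metis det_I det_mul power2_eq_square)
  then show ?thesis
    by (simp add: abs_square_eq_1)
qed

lemma det_scales_measure_swap:
  fixes m n :: "'n::finite"
  shows "det_scales_measure (\<lambda>x::real^'n. \<chi> i. x $ Transposition.transpose m n i)"
    (is "det_scales_measure ?h")
proof (rule det_scales_measure_unimodular)
  show lin: "linear ?h"
    by (rule linearI) (simp_all add: vec_eq_iff)
  show "\<bar>det (matrix ?h)\<bar> = 1"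
    by (rule abs_det_involution[OF lin]) (simp add: fun_eq_iff vec_eq_iff)
  fix a b :: "real^'n"
  have box: "?h ` cbox a b = cbox (?h a) (?h b)"
    by (auto simp: image_iff lambda_swap_Galois mem_box_cart) (metis transpose_involutory)+
  have "(\<Prod>i\<in>UNIV. b $ Transposition.transpose m n i - a $ Transposition.transpose m n i)
      = (\<Prod>i\<in>UNIV. b $ i - a $ i)"
    using prod.permute[OF permutes_swap_id, where S = UNIV and g = "\<lambda>i. b $ i - a $ i"]
    by (simp add: o_def)
  moreover have "cbox (?h a) (?h b) = {} \<longleftrightarrow> cbox a b = {}"
    unfolding box [symmetric] by simp
  ultimately show "measure lebesgue (?h ` cbox a b) = measure lebesgue (cbox a b)"
    unfolding box by (simp add: content_cbox_if_cart)
qed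

lemma det_shear:
  fixes m n :: "'n::finite"
  assumes "m \<noteq> n"
  shows "det (matrix (\<lambda>x::real^'n. \<chi> i. if i = m then x $ m + x $ n else x $ i)) = 1"
proof -
  have "matrix (\<lambda>x::real^'n. \<chi> i. if i = m then x $ m + x $ n else x $ i)
      = (\<chi> k. if k = m then row m (mat 1) + (1::real) *s row n (mat 1) else row k (mat 1))"
    by (auto simp: vec_eq_iff matrix_def axis_def mat_def row_def)
  then show ?thesis
    using det_row_operation[OF assms, where c = 1 and A = "mat 1 :: real^'n^'n"] by simp
qed

lemma det_scales_measure_shear:
  fixes m n :: "'n::finite"
  assumes "m \<noteq> n"
  shows "det_scales_measure (\<lambda>x::real^'n. \<chi> i. if i = m then x $ m + x $ n else x $ i)"
    (is "det_scales_measure ?h")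
proof (rule det_scales_measure_unimodular)
  show lin: "linear ?h"
    by (rule linearI) (auto simp: vec_eq_iff algebra_simps)
  show "\<bar>det (matrix ?h)\<bar> = 1"
    using det_shear[OF assms] by simp
  fix a b :: "real^'n"
  show "measure lebesgue (?h ` cbox a b) = measure lebesgue (cbox a b)"
  proof (cases "cbox a b = {}")
    case False
    txt \<open>measure_shear_interval needs the box in the half-space x_n \<ge> 0, so translate first.\<close>
    define v where "v = axis n (a $ n)"
    have shift: "cbox a b = (+) v ` cbox (a - v) (b - v)"
      using cbox_translation[of v "a - v" "b - v"] by simp
    have "?h ` cbox a b = (+) (?h v) ` ?h ` cbox (a - v) (b - v)"
      unfolding shift image_comp by (simp add: o_def linear_add[OF lin])
    then have "measure lebesgue (?h ` cbox a b) = measure lebesgue (?h ` cbox (a - v) (b - v))"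
      by (simp add: measure_translation)
    also have "\<dots> = measure lebesgue (cbox (a - v) (b - v))"
      using False assms by (intro measure_shear_interval) (auto simp: shift v_def)
    also have "\<dots> = measure lebesgue (cbox a b)"
      by (simp add: shift measure_translation)
    finally show ?thesis .
  qed simp
qed

theorem det_scales_measure_linear:
  fixes f :: "real^'n \<Rightarrow> real^'n"
  assumes "linear f"
  shows "det_scales_measure f"
proof (rule induct_linear_elementary[OF assms])
  show "det_scales_measure (f \<circ> g)"
    if "linear f" "linear g" "det_scales_measure f" "det_scales_measure g"
    for f g :: "real^'n \<Rightarrow> real^'n"
    using that by (rule det_scales_measure_comp)
next
  fix f :: "real^'n \<Rightarrow> real^'n" and i
  assume "linear f" and zero: "\<And>x. f x $ i = 0"
  have "\<not> inj f"
    using linear_injective_imp_surjective[OF \<open>linear f\<close>] zero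
    by (metis surjD vec_component zero_neq_one)
  with \<open>linear f\<close> show "det_scales_measure f"
    by (rule det_scales_measure_singular)
next
  fix m n :: 'n
  assume "m \<noteq> n"
  then show "det_scales_measure (\<lambda>x. \<chi> i. if i = m then x $ m + x $ n else x $ i)"
    by (rule det_scales_measure_shear)
next
  show "det_scales_measure (\<lambda>x. \<chi> i. c i * x $ i)" for c :: "'n \<Rightarrow> real"
    by (rule det_scales_measure_stretch)
next
  show "det_scales_measure (\<lambda>x. \<chi> i. x $ Transposition.transpose m n i)" for m n :: 'n
    by (rule det_scales_measure_swap)
qed

corollary measure_linear_image_cart:
  fixes f :: "real^'n \<Rightarrow> real^'n"
  assumes "linear f" "S \<in> lmeasurable"
  shows "measure lebesgue (f ` S) = \<bar>det (matrix f)\<bar> * measure lebesgue S"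
  using det_scales_measure_linear[OF assms(1)] assms(2)
  unfolding det_scales_measure_def by blast


section \<open>Linear maps with Lipschitz constant at most 1\<close>

lemma lip_le_1_linear_iff:
  assumes "linear F"
  shows "lip_le_1 s \<sigma> F \<longleftrightarrow> (\<forall>v. \<sigma> (F v) \<le> s v)"
  unfolding lip_le_1_def by (metis assms diff_zero linear_diff)

lemma unit_ball_subset_vimage_iff:
  fixes \<sigma> s :: "real^'n \<Rightarrow> real"
  assumes \<sigma>: "is_norm \<sigma>" and s: "is_norm s" and "linear F"
  shows "unit_ball s \<subseteq> F -` unit_ball \<sigma> \<longleftrightarrow> lip_le_1 s \<sigma> F"
proof
  assume sub: "unit_ball s \<subseteq> F -` unit_ball \<sigma>"
  have "\<sigma> (F v) \<le> s v" for v
  proof (cases "v = 0")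
    case False
    then have "s v > 0"
      by (rule is_norm_pos[OF s])
    moreover have "s (v /\<^sub>R s v) \<le> 1"
      using \<open>s v > 0\<close> by (simp add: is_norm_scaleR[OF s])
    then have "\<sigma> (F (v /\<^sub>R s v)) \<le> 1"
      using sub by (auto simp: unit_ball_def)
    ultimately show ?thesis
      by (simp add: linear_scale[OF \<open>linear F\<close>] is_norm_scaleR[OF \<sigma>] field_simps)
  qed (simp add: linear_0[OF \<open>linear F\<close>] \<sigma> s)
  then show "lip_le_1 s \<sigma> F"
    by (simp add: lip_le_1_linear_iff[OF \<open>linear F\<close>])
next
  assume "lip_le_1 s \<sigma> F"
  then show "unit_ball s \<subseteq> F -` unit_ball \<sigma>"
    by (auto simp: lip_le_1_linear_iff[OF \<open>linear F\<close>] unit_ball_def intro: order_trans)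
qed

lemma emeasure_eq_infinity_ball_progression:
  fixes w :: "'a::euclidean_space"
  assumes "r > 0" "2 * r \<le> norm w" "S \<in> sets lebesgue"
    and balls: "\<And>k::nat. ball (real k *\<^sub>R w) r \<subseteq> S"
  shows "emeasure lebesgue S = \<infinity>"
proof -
  define A where "A k = ball (real k *\<^sub>R w) r" for k :: nat
  have "disjoint_family A"
    unfolding disjoint_family_on_def
  proof (intro ballI impI)
    fix i j :: nat
    assume "i \<noteq> j"
    then have "1 * (2 * r) \<le> \<bar>real i - real j\<bar> * norm w"
      using assms(1,2) by (intro mult_mono) auto
    then have "2 * r \<le> dist (real i *\<^sub>R w) (real j *\<^sub>R w)"
      by (simp add: dist_norm flip: scaleR_diff_left)
    moreover have "dist (real i *\<^sub>R w) (real j *\<^sub>R w) < 2 * r" if "x \<in> A i \<inter> A j" for x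
      using that dist_triangle[of "real i *\<^sub>R w" "real j *\<^sub>R w" x]
      by (simp add: A_def dist_commute)
    ultimately show "A i \<inter> A j = {}"
      by fastforce
  qed
  have "measure lebesgue (ball c r) = measure lebesgue (ball (0::'a) r)" for c :: 'a
    using content_ball_conv_unit_ball[of r c] content_ball_conv_unit_ball[of r "0::'a"] assms(1)
    by simp
  then have "emeasure lebesgue (A k) = ennreal (measure lebesgue (ball (0::'a) r))" for k
    unfolding A_def by (metis emeasure_eq_measure2 lmeasurable_ball)
  moreover have "measure lebesgue (ball (0::'a) r) > 0"
    using content_ball_pos[OF assms(1)] by simp
  ultimately have "\<infinity> = (\<Sum>k. emeasure lebesgue (A k))"
    by (simp add: summable_iff_suminf_neq_top summable_const_iff)
  also have "\<dots> = emeasure lebesgue (\<Union>k. A k)"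
    by (rule suminf_emeasure[OF _ \<open>disjoint_family A\<close>]) (auto simp: A_def)
  also have "\<dots> \<le> emeasure lebesgue S"
    using balls assms(3) by (intro emeasure_mono) (auto simp: A_def)
  finally show ?thesis
    by (simp add: top_unique)
qed

lemma emeasure_vimage_unit_ball_singular:
  fixes \<sigma> s :: "real^'n \<Rightarrow> real"
  assumes \<sigma>: "is_norm \<sigma>" and s: "is_norm s"
    and "linear F" "\<not> inj F" "lip_le_1 s \<sigma> F"
  shows "emeasure lebesgue (F -` unit_ball \<sigma>) = \<infinity>"
proof -
  obtain r where "r > 0" and r: "ball 0 r \<subseteq> unit_ball s"
    using ball_subset_unit_ball[OF s] by blast
  obtain v where "v \<noteq> 0" "F v = 0"
    using \<open>linear F\<close> \<open>\<not> inj F\<close> linear_injective_0 by blast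
  define w where "w = (2 * r / norm v) *\<^sub>R v"
  have "F w = 0"
    using \<open>F v = 0\<close> by (simp add: w_def linear_scale[OF \<open>linear F\<close>])
  have "ball (real k *\<^sub>R w) r \<subseteq> F -` unit_ball \<sigma>" for k :: nat
  proof
    fix x
    assume "x \<in> ball (real k *\<^sub>R w) r"
    then have "x - real k *\<^sub>R w \<in> unit_ball s"
      using r by (auto simp: dist_norm norm_minus_commute)
    moreover have "F (x - real k *\<^sub>R w) = F x"
      using \<open>F w = 0\<close> by (simp add: linear_diff[OF \<open>linear F\<close>] linear_scale[OF \<open>linear F\<close>])
    ultimately show "x \<in> F -` unit_ball \<sigma>"
      using unit_ball_subset_vimage_iff[OF \<sigma> s \<open>linear F\<close>] \<open>lip_le_1 s \<sigma> F\<close> by auto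
  qed
  moreover have "closed (F -` unit_ball \<sigma>)"
    using closed_unit_ball[OF \<sigma>] \<open>linear F\<close>
    by (simp add: closed_vimage linear_continuous_on linear_conv_bounded_linear)
  then have "F -` unit_ball \<sigma> \<in> sets lebesgue"
    by (metis borel_closed sets_completionI_sets sets_lborel)
  moreover have "2 * r \<le> norm w"
    using \<open>r > 0\<close> \<open>v \<noteq> 0\<close> by (simp add: w_def)
  ultimately show ?thesis
    using \<open>r > 0\<close> by (intro emeasure_eq_infinity_ball_progression) auto
qed

lemma measure_vimage_unit_ball_ratio:
  fixes \<sigma> s :: "real^'n \<Rightarrow> real"
  assumes \<sigma>: "is_norm \<sigma>" and s: "is_norm s" and "linear F" "lip_le_1 s \<sigma> F"
  shows "measure lebesgue (unit_ball \<sigma>) / measure lebesgue (F -` unit_ball \<sigma>) = \<bar>det (matrix F)\<bar>"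
proof (cases "inj F")
  case True
  define G where "G = inv F"
  have "surj F"
    by (rule linear_inj_imp_surj[OF \<open>linear F\<close> True])
  have "linear G"
    unfolding G_def using inj_linear_imp_inv_linear[OF \<open>linear F\<close> True] by simp
  have "det (matrix F) * det (matrix G) = 1"
    using matrix_compose[OF \<open>linear G\<close> \<open>linear F\<close>] surj_f_inv_f[OF \<open>surj F\<close>]
    by (metis G_def comp_apply det_I det_mul eq_id_iff matrix_id_mat_1)
  then have "\<bar>det (matrix F)\<bar> = 1 / \<bar>det (matrix G)\<bar>"
    by (auto simp: eq_divide_eq simp flip: abs_mult)
  moreover have "measure lebesgue (F -` unit_ball \<sigma>) = \<bar>det (matrix G)\<bar> * measure lebesgue (unit_ball \<sigma>)"
    using bij_vimage_eq_inv_image[of F] True \<open>surj F\<close>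
      measure_linear_image_cart[OF \<open>linear G\<close> lmeasurable_compact[OF compact_unit_ball[OF \<sigma>]]]
    by (simp add: G_def bij_def)
  moreover have "measure lebesgue (unit_ball \<sigma>) > 0"
    by (rule measure_unit_ball_pos[OF \<sigma>])
  ultimately show ?thesis
    by simp
next
  case False
  then have "det (matrix F) = 0"
    using det_nz_iff_inj[OF \<open>linear F\<close>] by blast
  moreover have "measure lebesgue (F -` unit_ball \<sigma>) = 0"
    \<comment> \<open>measure returns 0 on sets of infinite measure, so the ratio is 0 as well\<close>
    using emeasure_vimage_unit_ball_singular[OF assms(1,2,3) False assms(4)]
    by (simp add: measure_def)
  ultimately show ?thesis
    by simp
qed

lemma has_derivative_imp_difference_quotient_at_right:
  assumes der: "(f has_derivative D) (at p)"
  shows "((\<lambda>t. (f (p + t *\<^sub>R v) - f p) /\<^sub>R t) \<longlongrightarrow> D v) (at_right 0)"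
proof -
  have "linear D"
    using der has_derivative_linear by blast
  have "((\<lambda>t. p + t *\<^sub>R v) has_derivative (\<lambda>t. t *\<^sub>R v)) (at 0 within {0<..})"
    by (auto intro!: derivative_eq_intros)
  then have "((\<lambda>t. f (p + t *\<^sub>R v)) has_derivative (\<lambda>t. D (t *\<^sub>R v))) (at 0 within {0<..})"
    by (rule has_derivative_compose) (use der in simp)
  then have "((\<lambda>t. (f (p + t *\<^sub>R v) - f p - t *\<^sub>R D v) /\<^sub>R norm t) \<longlongrightarrow> 0) (at_right 0)"
    by (simp add: has_derivative_at_within linear_scale[OF \<open>linear D\<close>])
  moreover have "\<forall>\<^sub>F t in at_right 0.
      (f (p + t *\<^sub>R v) - f p - t *\<^sub>R D v) /\<^sub>R norm t = (f (p + t *\<^sub>R v) - f p) /\<^sub>R t - D v"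
    by (rule eventually_mono[OF eventually_at_right_less]) (simp add: scaleR_diff_right)
  ultimately have "((\<lambda>t. (f (p + t *\<^sub>R v) - f p) /\<^sub>R t - D v) \<longlongrightarrow> 0) (at_right 0)"
    by (rule Lim_transform_eventually)
  then show ?thesis
    by (simp add: LIM_zero_iff)
qed

lemma lip_le_1_derivative:
  fixes \<sigma> s :: "real^'n \<Rightarrow> real" and \<pi> D :: "real^'n \<Rightarrow> real^'n"
  assumes \<sigma>: "is_norm \<sigma>" and s: "is_norm s"
    and lip: "lip_le_1 s \<sigma> \<pi>" and der: "(\<pi> has_derivative D) (at p)"
  shows "lip_le_1 s \<sigma> D"
proof -
  have "\<sigma> (D v) \<le> s v" for v
  proof (rule tendsto_upperbound)
    show "((\<lambda>t. \<sigma> ((\<pi> (p + t *\<^sub>R v) - \<pi> p) /\<^sub>R t)) \<longlongrightarrow> \<sigma> (D v)) (at_right 0)"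
      using has_derivative_imp_difference_quotient_at_right[OF der]
      by (rule continuous_on_tendsto_compose[OF is_norm_continuous_on[OF \<sigma>, of UNIV]]) simp_all
    show "\<forall>\<^sub>F t in at_right 0. \<sigma> ((\<pi> (p + t *\<^sub>R v) - \<pi> p) /\<^sub>R t) \<le> s v"
    proof (rule eventually_mono[OF eventually_at_right_less])
      fix t :: real
      assume "0 < t"
      have "\<sigma> ((\<pi> (p + t *\<^sub>R v) - \<pi> p) /\<^sub>R t) = \<sigma> (\<pi> (p + t *\<^sub>R v) - \<pi> p) / t"
        using \<open>0 < t\<close> by (simp add: is_norm_scaleR[OF \<sigma>] divide_inverse_commute)
      also have "\<dots> \<le> s (t *\<^sub>R v) / t"
        using lip \<open>0 < t\<close> unfolding lip_le_1_def
        by (metis add_diff_cancel_left' divide_right_mono less_eq_real_def)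
      also have "\<dots> = s v"
        using \<open>0 < t\<close> by (simp add: is_norm_scaleR[OF s])
      finally show "\<sigma> ((\<pi> (p + t *\<^sub>R v) - \<pi> p) /\<^sub>R t) \<le> s v" .
    qed
  qed (simp add: trivial_limit_at_right_real)
  then show ?thesis
    using der has_derivative_linear lip_le_1_linear_iff by blast
qed

lemma compact_lip_le_1_matrices:
  fixes \<sigma> s :: "real^'n \<Rightarrow> real"
  assumes \<sigma>: "is_norm \<sigma>" and s: "is_norm s"
  shows "compact {A :: real^'n^'n. lip_le_1 s \<sigma> ((*v) A)}" (is "compact ?K")
proof -
  have K: "?K = (\<Inter>v. {A. \<sigma> (A *v v) \<le> s v})"
    by (auto simp: lip_le_1_linear_iff)
  have "closed {A :: real^'n^'n. \<sigma> (A *v v) \<le> s v}" for v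
  proof -
    have "continuous_on UNIV (\<lambda>A :: real^'n^'n. A *v v)"
      unfolding matrix_vector_mult_def by (intro continuous_intros)
    then have "continuous_on UNIV (\<lambda>A :: real^'n^'n. \<sigma> (A *v v))"
      by (rule continuous_on_compose2[OF is_norm_continuous_on[OF \<sigma>]]) auto
    then show ?thesis
      by (intro closed_Collect_le continuous_on_const) auto
  qed
  then have "closed ?K"
    unfolding K by blast
  obtain c where "c > 0" and c: "\<And>x. c * norm x \<le> \<sigma> x"
    using is_norm_ge_norm[OF \<sigma>] by blast
  have "norm A \<le> (\<Sum>i\<in>(UNIV::'n set). \<Sum>j\<in>UNIV. s (axis j 1) / c)" if "A \<in> ?K" for A
  proof -
    have entry: "\<bar>A $ i $ j\<bar> \<le> s (axis j 1) / c" for i j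
    proof -
      have "c * \<bar>A $ i $ j\<bar> \<le> c * norm (A *v axis j 1)"
        using \<open>c > 0\<close> component_le_norm_cart[of "A *v axis j 1" i]
        by (simp add: matrix_vector_mult_basis column_def)
      also have "\<dots> \<le> s (axis j 1)"
        using c[of "A *v axis j 1"] that K by (auto intro: order_trans)
      finally show ?thesis
        using \<open>c > 0\<close> by (simp add: field_simps mult.commute)
    qed
    have "norm A \<le> (\<Sum>i\<in>UNIV. norm (A $ i))"
      unfolding norm_vec_def by (rule L2_set_le_sum) simp
    also have "\<dots> \<le> (\<Sum>i\<in>UNIV. \<Sum>j\<in>UNIV. \<bar>A $ i $ j\<bar>)"
      by (intro sum_mono norm_le_l1_cart)
    also have "\<dots> \<le> (\<Sum>i\<in>(UNIV::'n set). \<Sum>j\<in>UNIV. s (axis j 1) / c)"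
      by (intro sum_mono) (rule entry)
    finally show ?thesis .
  qed
  then have "bounded ?K"
    unfolding bounded_iff by blast
  with \<open>closed ?K\<close> show ?thesis
    by (simp add: compact_eq_bounded_closed)
qed

lemma Jsigma_eq_Sup_abs_det:
  fixes \<sigma> s :: "real^'n \<Rightarrow> real"
  assumes \<sigma>: "is_norm \<sigma>" and s: "is_norm s"
  shows "Jsigma \<sigma> s = Sup ((\<lambda>F. \<bar>det (matrix F)\<bar>) ` {F. linear F \<and> lip_le_1 s \<sigma> F})"
proof -
  have "measure lebesgue (unit_ball \<sigma>) / measure lebesgue (F -` unit_ball \<sigma>) = \<bar>det (matrix F)\<bar>
      \<and> unit_ball s \<subseteq> F -` unit_ball \<sigma>"
    if "linear F" "lip_le_1 s \<sigma> F" for F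
    using that unit_ball_subset_vimage_iff[OF \<sigma> s] measure_vimage_unit_ball_ratio[OF \<sigma> s]
    by blast
  then show ?thesis
    unfolding Jsigma_def using unit_ball_subset_vimage_iff[OF \<sigma> s]
    by (intro arg_cong[where f = Sup]) (auto simp: image_def; metis)
qed

lemma Jsigma_attained:
  fixes \<sigma> s :: "real^'n \<Rightarrow> real"
  assumes \<sigma>: "is_norm \<sigma>" and s: "is_norm s"
  obtains A :: "real^'n^'n" where "lip_le_1 s \<sigma> ((*v) A)" "Jsigma \<sigma> s = \<bar>det A\<bar>"
    "\<And>F. linear F \<Longrightarrow> lip_le_1 s \<sigma> F \<Longrightarrow> \<bar>det (matrix F)\<bar> \<le> \<bar>det A\<bar>"
proof -
  let ?K = "{A :: real^'n^'n. lip_le_1 s \<sigma> ((*v) A)}"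
  have "0 \<in> ?K"
    using \<sigma> s by (simp add: lip_le_1_def is_norm_nonneg)
  moreover have "continuous_on ?K (\<lambda>A. \<bar>det A\<bar>)"
    unfolding det_def by (intro continuous_intros)
  ultimately obtain A where "A \<in> ?K" and max: "\<And>B. B \<in> ?K \<Longrightarrow> \<bar>det B\<bar> \<le> \<bar>det A\<bar>"
    using continuous_attains_sup[OF compact_lip_le_1_matrices[OF \<sigma> s]] by blast
  have le: "\<bar>det (matrix F)\<bar> \<le> \<bar>det A\<bar>" if "linear F" "lip_le_1 s \<sigma> F" for F
    using max[of "matrix F"] that by simp
  have "Jsigma \<sigma> s = \<bar>det A\<bar>"
    unfolding Jsigma_eq_Sup_abs_det[OF \<sigma> s]
  proof (rule cSup_eq_maximum)
    show "\<bar>det A\<bar> \<in> (\<lambda>F. \<bar>det (matrix F)\<bar>) ` {F. linear F \<and> lip_le_1 s \<sigma> F}"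
      using \<open>A \<in> ?K\<close> by (intro image_eqI[of _ _ "(*v) A"]) auto
  qed (use le in auto)
  with \<open>A \<in> ?K\<close> le show thesis
    using that by blast
qed

theorem lemma5p3:
  fixes \<sigma> s :: "real^'n \<Rightarrow> real"
  assumes "is_norm \<sigma>" and "is_norm s"
  shows "(\<forall>\<pi>. lip_le_1 s \<sigma> \<pi> \<longrightarrow>
           (AE p in lebesgue. \<forall>D. (\<pi> has_derivative D) (at p) \<longrightarrow>
              \<bar>det (matrix D)\<bar> \<le> Jsigma \<sigma> s))
       \<and> (\<exists>\<pi>. lip_le_1 s \<sigma> \<pi> \<and>
           (AE p in lebesgue. \<exists>D. (\<pi> has_derivative D) (at p) \<and>
              \<bar>det (matrix D)\<bar> = Jsigma \<sigma> s))"
proof -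
  obtain A :: "real^'n^'n" where lip: "lip_le_1 s \<sigma> ((*v) A)" and J: "Jsigma \<sigma> s = \<bar>det A\<bar>"
    and max: "\<And>F. linear F \<Longrightarrow> lip_le_1 s \<sigma> F \<Longrightarrow> \<bar>det (matrix F)\<bar> \<le> \<bar>det A\<bar>"
    using Jsigma_attained[OF assms] by blast
  have "\<bar>det (matrix D)\<bar> \<le> Jsigma \<sigma> s"
    if "lip_le_1 s \<sigma> \<pi>" "(\<pi> has_derivative D) (at p)" for \<pi> D p
    using max[OF has_derivative_linear[OF that(2)] lip_le_1_derivative[OF assms that]] J by simp
  moreover have "((*v) A has_derivative (*v) A) (at p)" for p
    by (simp add: bounded_linear_imp_has_derivative matrix_vector_mul_bounded_linear)
  ultimately show ?thesis
    using lip J by (auto intro!: AE_I2 exI[of _ "(*v) A"])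
qed

end
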